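(* For $x\in\mathbb X$ let $\bar\varrho_1(x):=\inf\{\|\xi\|_{\mathbb X_A'}:\xi\in\mathbb X_A',\ \xi|_{\mathbb X}\in\partial\mathcal R(x)\}$ (with $\inf\emptyset=\infty$). Then $\frac1M\varrho_1(x)\le\bar\varrho_1(x)\le M\varrho_1(x)$ for all $x\in\mathbb X$. In particular, $x\in K_1$ if and only if there exists $\xi\in\mathbb X_A'$ with $\xi|_{\mathbb X}\in\partial\mathcal R(x)$.
   Context: $\mathbb X$, $\mathbb X_A$ real Banach spaces with a continuous dense embedding $\mathbb X\subset\mathbb X_A$; $\mathbb Y$ real Hilbert space; $A:\mathbb X_A\to\mathbb Y$ bounded linear with $\frac1M\|x\|_{\mathbb X_A}\le\|Ax\|_{\mathbb Y}\le M\|x\|_{\mathbb X_A}$ for all $x\in\mathbb X_A$, some $M\ge1$. $\mathcal R(x):=\frac1u\|x\|_{\mathbb X}^u$ with fixed $u\in[1,\infty)$. If $\mathbb X$ is not reflexive, assume there is a topology $\tau$ on $\mathbb X$, making it locally convex Hausdorff, in which sublevel sets of $\mathcal R$ are $\tau$-compact and $A|_{\mathbb X}$ is $\tau$-to-weak continuous. $R_\alpha(g):=\operatorname{argmin}_{x\in\mathbb X}(\frac1{2\alpha}\|g-Ax\|^2_{\mathbb Y}+\mathcal R(x))$, $\varrho_1(x):=\sup\{\alpha^{-1}\|Ax-Ax_\alpha\|_{\mathbb Y}:\alpha>0,x_\alpha\in R_\alpha(Ax)\}$, $K_1:=\{x\in\mathbb X:\varrho_1(x)<\infty\}$. $\partial\mathcal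 R(x)\subset\mathbb X'$ is the subdifferential: $\eta\in\partial\mathcal R(x)$ iff $\mathcal R(z)\ge\mathcal R(x)+\eta(z-x)$ for all $z\in\mathbb X$. *)

theory Defs
  imports "HOL-Analysis.Analysis" "HOL-Library.Extended_Real"
begin

definition regR :: "real \<Rightarrow> 'x::real_normed_vector \<Rightarrow> real" where
  "regR u x = (norm x powr u) / u"

text \<open>Tikhonov minimisers R_alpha(g) (the argmin set, possibly empty in general).
  The embedding X into X_A is the map j, and A acts on X_A.\<close>
definition tik_min ::
  "('xa::real_normed_vector \<Rightarrow> 'y::real_inner) \<Rightarrow> ('x::real_normed_vector \<Rightarrow> 'xa) \<Rightarrow> real
     \<Rightarrow> real \<Rightarrow> 'y \<Rightarrow> 'x set" where
  "tik_min A j u \<alpha> g =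
     {x. \<forall>z. (norm (g - A (j x)))\<^sup>2 / (2 * \<alpha>) + regR u x
            \<le> (norm (g - A (j z)))\<^sup>2 / (2 * \<alpha>) + regR u z}"

definition rho1 ::
  "('xa::real_normed_vector \<Rightarrow> 'y::real_inner) \<Rightarrow> ('x::real_normed_vector \<Rightarrow> 'xa) \<Rightarrow> real
     \<Rightarrow> 'x \<Rightarrow> ereal" where
  "rho1 A j u x = Sup {ereal (norm (A (j x) - A (j xa)) / \<alpha>) | \<alpha> xa.
                        \<alpha> > 0 \<and> xa \<in> tik_min A j u \<alpha> (A (j x))}"

definition K1 ::
  "('xa::real_normed_vector \<Rightarrow> 'y::real_inner) \<Rightarrow> ('x::real_normed_vector \<Rightarrow> 'xa) \<Rightarrow> real
     \<Rightarrow> 'x set" where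
  "K1 A j u = {x. rho1 A j u x < \<infinity>}"

definition subdiff_R :: "real \<Rightarrow> 'x::real_normed_vector \<Rightarrow> ('x \<Rightarrow> real) set" where
  "subdiff_R u x = {\<eta>. bounded_linear \<eta> \<and> (\<forall>z. regR u z \<ge> regR u x + \<eta> (z - x))}"

text \<open>bar rho_1(x) = inf { norm xi in X_A' : xi in X_A', xi restricted to X in dR(x) }
  (infimum of the empty set is \<infinity> in ereal).  The dual norm is the operator norm.\<close>
definition rho1_bar ::
  "('x::real_normed_vector \<Rightarrow> 'xa::real_normed_vector) \<Rightarrow> real \<Rightarrow> 'x \<Rightarrow> ereal" where
  "rho1_bar j u x = Inf {ereal (onorm \<xi>) | \<xi>. bounded_linear \<xi> \<and> (\<xi> \<circ> j) \<in> subdiff_R u x}"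

text \<open>Reflexivity: the canonical embedding of X into its bidual is surjective.
  Elements of the bidual are bounded linear functionals on the dual space
  (the dual space = bounded linear functionals X \<Rightarrow> real with the operator norm).\<close>
definition reflexive_space :: "'x::real_normed_vector itself \<Rightarrow> bool" where
  "reflexive_space _ \<longleftrightarrow>
     (\<forall>\<Phi> :: ('x \<Rightarrow> real) \<Rightarrow> real.
        ((\<forall>f g. bounded_linear f \<longrightarrow> bounded_linear g \<longrightarrow> \<Phi> (\<lambda>x. f x + g x) = \<Phi> f + \<Phi> g)
         \<and> (\<forall>c f. bounded_linear f \<longrightarrow> \<Phi> (\<lambda>x. c * f x) = c * \<Phi> f)
         \<and> (\<exists>C. \<forall>f. bounded_linear f \<longrightarrow> \<bar>\<Phi> f\<bar> \<le> C * onorm f))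
        \<longrightarrow> (\<exists>x. \<forall>f. bounded_linear f \<longrightarrow> \<Phi> f = f x))"

definition weak_top :: "'y::real_inner topology" where
  "weak_top = topology_generated_by {(\<lambda>y. inner y v) -` U | v U. open U}"

definition locally_convex_Hausdorff :: "'x::real_normed_vector topology \<Rightarrow> bool" where
  "locally_convex_Hausdorff \<tau> \<longleftrightarrow>
     topspace \<tau> = UNIV \<and> Hausdorff_space \<tau>
     \<and> continuous_map (prod_topology \<tau> \<tau>) \<tau> (\<lambda>(x, y). x + y)
     \<and> continuous_map (prod_topology euclideanreal \<tau>) \<tau> (\<lambda>(c, x). c *\<^sub>R x)
     \<and> (\<forall>U. openin \<tau> U \<and> 0 \<in> U \<longrightarrow> (\<exists>V. openin \<tau> V \<and> convex V \<and> 0 \<in> V \<and> V \<subseteq> U))"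

text \<open>Standing assumption when X is not reflexive.\<close>
definition admissible_topology ::
  "('xa::real_normed_vector \<Rightarrow> 'y::real_inner) \<Rightarrow> ('x::real_normed_vector \<Rightarrow> 'xa) \<Rightarrow> real
     \<Rightarrow> 'x topology \<Rightarrow> bool" where
  "admissible_topology A j u \<tau> \<longleftrightarrow>
     locally_convex_Hausdorff \<tau>
     \<and> (\<forall>c. compactin \<tau> {x. regR u x \<le> c})
     \<and> continuous_map \<tau> weak_top (\<lambda>x. A (j x))"

end

theory Submission
  imports Defs
begin

text \<open>Let \<open>x\<^sub>\<alpha>\<close> minimise the Tikhonov functional for the data \<open>A x\<close>. Convexity of \<open>regR u\<close>
  gives the optimality condition: the scaled residual \<open>w\<^sub>\<alpha> = (A x - A x\<^sub>\<alpha>) / \<alpha>\<close>, read through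
  \<open>A\<close>, is a subgradient of \<open>regR u\<close> at \<open>x\<^sub>\<alpha>\<close>. Testing it against a subgradient \<open>\<xi>\<close> at \<open>x\<close>
  gives \<open>norm w\<^sub>\<alpha> \<le> M * onorm \<xi>\<close>, which is the lower bound for \<open>rho1_bar\<close>.
  For the upper bound, comparing the optimality conditions for \<open>\<alpha> \<le> \<beta>\<close> shows
  \<open>norm (w\<^sub>\<alpha> - w\<^sub>\<beta>)\<^sup>2 \<le> (norm w\<^sub>\<alpha>)\<^sup>2 - (norm w\<^sub>\<beta>)\<^sup>2\<close>, so if \<open>rho1\<close> is finite at \<open>x\<close> the
  \<open>w\<^sub>\<alpha>\<close> converge to some \<open>w\<close> as \<open>\<alpha> \<rightarrow> 0\<close>. The minimisers have bounded penalty, so the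
  compactness hypothesis (reflexivity, or the topology \<open>\<tau>\<close>), used through limits along a
  free ultrafilter, and lower semicontinuity of the penalty let one pass to the limit in the
  optimality condition: \<open>\<lambda>y. inner w (A y)\<close> restricts to a subgradient at \<open>x\<close> of norm at
  most \<open>M * rho1\<close>. The same compactness gives existence of the minimisers, and in the
  reflexive case Hahn-Banach provides the weak lower semicontinuity of the norm.\<close>

section \<open>Free ultrafilters on the natural numbers\<close>

definition free_ultrafilter :: "nat filter \<Rightarrow> bool" where
  "free_ultrafilter U \<longleftrightarrow> U \<noteq> bot \<and> U \<le> sequentially
     \<and> (\<forall>P. eventually P U \<or> eventually (\<lambda>k. \<not> P k) U)"

lemma exists_free_ultrafilter: "\<exists>U. free_ultrafilter U"
proof -
  define \<F> where "\<F> = {F :: nat filter. F \<noteq> bot \<and> F \<le> sequentially}"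
  have "\<exists>U\<in>\<F>. \<forall>F\<in>\<F>. F \<le> U \<longrightarrow> F = U"
  proof (rule predicate_Zorn[where P = "\<lambda>F G. G \<le> F"])
    show "partial_order_on \<F> (relation_of (\<lambda>F G. G \<le> F) \<F>)"
      unfolding partial_order_on_def preorder_on_def refl_on_def trans_on_def antisym_on_def
        relation_of_def by auto
  next
    fix C assume C: "C \<in> Chains (relation_of (\<lambda>F G. G \<le> F) \<F>)"
    then have C\<F>: "C \<subseteq> \<F>" and total: "\<And>F G. F \<in> C \<Longrightarrow> G \<in> C \<Longrightarrow> F \<le> G \<or> G \<le> F"
      unfolding Chains_def relation_of_def by auto
    show "\<exists>U\<in>\<F>. \<forall>F\<in>C. U \<le> F"
    proof (cases "C = {}")
      case True
      then show ?thesis by (intro bexI[of _ sequentially]) (auto simp: \<F>_def)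
    next
      case False
      have "eventually P (Inf C) \<longleftrightarrow> (\<exists>F\<in>C. eventually P F)" for P
        by (rule eventually_Inf_base[OF False]) (metis inf.absorb_iff2 inf.orderE total)
      then have "Inf C \<noteq> bot"
        using C\<F> by (auto simp: trivial_limit_def \<F>_def)
      moreover have "Inf C \<le> sequentially"
        using False C\<F> by (auto simp: \<F>_def intro: Inf_lower2)
      ultimately show ?thesis by (intro bexI[of _ "Inf C"]) (auto simp: \<F>_def Inf_lower)
    qed
  qed
  then obtain U where U: "U \<noteq> bot" "U \<le> sequentially"
    and minimal: "\<And>F. F \<noteq> bot \<Longrightarrow> F \<le> U \<Longrightarrow> F = U"
    unfolding \<F>_def by (metis (mono_tags, lifting) mem_Collect_eq order.trans)
  have "eventually P U" if "\<not> eventually (\<lambda>k. \<not> P k) U" for P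
  proof -
    \<comment> \<open>Restricting \<open>U\<close> to \<open>P\<close> keeps it proper, so by minimality it does not change \<open>U\<close>.\<close>
    have "inf U (principal {k. P k}) \<noteq> bot"
      using that by (auto simp: trivial_limit_def eventually_inf_principal)
    then have "inf U (principal {k. P k}) = U" by (rule minimal) simp
    moreover have "eventually P (inf U (principal {k. P k}))"
      by (simp add: eventually_inf_principal)
    ultimately show ?thesis by simp
  qed
  then show ?thesis using U unfolding free_ultrafilter_def by blast
qed

lemma free_ultrafilter_limit_in_compact:
  assumes U: "free_ultrafilter U" and K: "compact K" and f: "\<And>k. f k \<in> K"
  shows "\<exists>L\<in>K. (f \<longlongrightarrow> L) U"
proof -
  have "filtermap f U \<noteq> bot" using U unfolding free_ultrafilter_def by (simp add: filtermap_bot_iff)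
  moreover have "eventually (\<lambda>y. y \<in> K) (filtermap f U)" by (simp add: eventually_filtermap f)
  ultimately obtain L where "L \<in> K" and L: "inf (nhds L) (filtermap f U) \<noteq> bot"
    using K unfolding compact_filter by blast
  have "eventually (\<lambda>k. f k \<in> S) U" if "open S" "L \<in> S" for S
  proof (rule ccontr)
    assume "\<not> eventually (\<lambda>k. f k \<in> S) U"
    then have "eventually (\<lambda>k. f k \<notin> S) U"
      using U unfolding free_ultrafilter_def by blast
    then have "eventually (\<lambda>y. y \<notin> S) (filtermap f U)"
      by (simp add: eventually_filtermap)
    moreover have "eventually (\<lambda>y. y \<in> S) (nhds L)" using that by (rule eventually_nhds_in_open)
    ultimately have "eventually (\<lambda>_. False) (inf (nhds L) (filtermap f U))"
      unfolding eventually_inf by blast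
    then show False using L by (simp add: trivial_limit_def)
  qed
  then show ?thesis using \<open>L \<in> K\<close> unfolding tendsto_def by blast
qed

lemma free_ultrafilter_limit_bounded:
  fixes f :: "nat \<Rightarrow> real"
  assumes "free_ultrafilter U" and "\<And>k. \<bar>f k\<bar> \<le> B"
  shows "\<exists>L. (f \<longlongrightarrow> L) U"
proof -
  have "f k \<in> {-B..B}" for k using assms(2)[of k] by (auto simp: abs_le_iff)
  then show ?thesis using free_ultrafilter_limit_in_compact[OF assms(1) compact_Icc] by blast
qed

section \<open>Norming functionals\<close>

text \<open>Graphs of linear functionals on subspaces that are dominated by the norm; the Zorn
  argument for the Hahn-Banach theorem runs over these.\<close>
definition norm_dominated_graph :: "('a::real_normed_vector \<times> real) set \<Rightarrow> bool" where
  "norm_dominated_graph G \<longleftrightarrow> (0, 0) \<in> G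
     \<and> (\<forall>a s b t. (a, s) \<in> G \<longrightarrow> (b, t) \<in> G \<longrightarrow> (a + b, s + t) \<in> G)
     \<and> (\<forall>k a s. (a, s) \<in> G \<longrightarrow> (k *\<^sub>R a, k * s) \<in> G)
     \<and> (\<forall>a s. (a, s) \<in> G \<longrightarrow> s \<le> norm a)"

lemma norm_dominated_graph_unique:
  assumes G: "norm_dominated_graph G" and "(a, s) \<in> G" "(a, t) \<in> G"
  shows "s = t"
proof -
  have "(a + (-1) *\<^sub>R a, s + (-1) * t) \<in> G" "(a + (-1) *\<^sub>R a, t + (-1) * s) \<in> G"
    using assms unfolding norm_dominated_graph_def by blast+
  then have "(0, s - t) \<in> G" "(0, t - s) \<in> G" by simp_all
  then have "s - t \<le> 0" "t - s \<le> 0"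
    using G unfolding norm_dominated_graph_def by (metis norm_zero)+
  then show ?thesis by simp
qed

lemma norm_dominated_graph_Union:
  assumes "C \<noteq> {}" and C: "\<And>G. G \<in> C \<Longrightarrow> norm_dominated_graph G"
    and chain: "\<And>G H. G \<in> C \<Longrightarrow> H \<in> C \<Longrightarrow> G \<subseteq> H \<or> H \<subseteq> G"
  shows "norm_dominated_graph (\<Union>C)"
  unfolding norm_dominated_graph_def
proof (intro conjI allI impI)
  show "(0, 0) \<in> \<Union>C" using \<open>C \<noteq> {}\<close> C unfolding norm_dominated_graph_def by blast
next
  fix a s b t assume "(a, s) \<in> \<Union>C" "(b, t) \<in> \<Union>C"
  then obtain G H where GH: "G \<in> C" "H \<in> C" "(a, s) \<in> G" "(b, t) \<in> H" by auto
  from chain[OF GH(1,2)] have "(a, s) \<in> G \<union> H \<and> (b, t) \<in> G \<union> H \<and> (G \<union> H = G \<or> G \<union> H = H)"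
    using GH by blast
  then have "(a + b, s + t) \<in> G \<union> H"
    using C[OF GH(1)] C[OF GH(2)] unfolding norm_dominated_graph_def by metis
  then show "(a + b, s + t) \<in> \<Union>C" using GH by blast
next
  fix k a s assume "(a, s) \<in> \<Union>C"
  then show "(k *\<^sub>R a, k * s) \<in> \<Union>C" using C unfolding norm_dominated_graph_def by blast
next
  fix a s assume "(a, s) \<in> \<Union>C"
  then show "s \<le> norm a" using C unfolding norm_dominated_graph_def by blast
qed

lemma norm_dominated_graph_separating_constant:
  assumes G: "norm_dominated_graph G"
  obtains c where "\<And>b r. (b, r) \<in> G \<Longrightarrow> r - norm (b - y) \<le> c"
    and "\<And>e s. (e, s) \<in> G \<Longrightarrow> c \<le> norm (e + y) - s"
proof -
  define V where "V = (\<lambda>(b, r). r - norm (b - y)) ` G"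
  have sep: "r - norm (b - y) \<le> norm (e + y) - s" if "(b, r) \<in> G" "(e, s) \<in> G" for b r e s
  proof -
    have "(b + e, r + s) \<in> G" using G that unfolding norm_dominated_graph_def by blast
    then have "r + s \<le> norm (b + e)" using G unfolding norm_dominated_graph_def by blast
    also have "\<dots> \<le> norm (e + y) + norm (b - y)"
      using norm_triangle_ineq[of "e + y" "b - y"] by (simp add: algebra_simps)
    finally show ?thesis by simp
  qed
  have "(0, 0) \<in> G" using G unfolding norm_dominated_graph_def by blast
  then have "V \<noteq> {}" unfolding V_def by auto
  have "bdd_above V"
    unfolding V_def bdd_above_def using sep[OF _ \<open>(0, 0) \<in> G\<close>] by (auto intro!: exI[of _ "norm y"])
  show thesis
  proof (rule that)
    show "r - norm (b - y) \<le> Sup V" if "(b, r) \<in> G" for b r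
      by (rule cSup_upper[OF _ \<open>bdd_above V\<close>]) (use that in \<open>auto simp: V_def intro!: bexI[of _ "(b, r)"]\<close>)
    show "Sup V \<le> norm (e + y) - s" if "(e, s) \<in> G" for e s
      by (rule cSup_least[OF \<open>V \<noteq> {}\<close>]) (use sep[OF _ that] in \<open>auto simp: V_def\<close>)
  qed
qed

lemma norm_dominated_graph_extension_dominated:
  assumes G: "norm_dominated_graph G" and "(e, s) \<in> G"
    and c_lower: "\<And>b r. (b, r) \<in> G \<Longrightarrow> r - norm (b - y) \<le> c"
    and c_upper: "\<And>e s. (e, s) \<in> G \<Longrightarrow> c \<le> norm (e + y) - s"
  shows "s + t * c \<le> norm (e + t *\<^sub>R y)"
proof -
  have scaled: "(k *\<^sub>R e, k * s) \<in> G" for k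
    using G \<open>(e, s) \<in> G\<close> unfolding norm_dominated_graph_def by blast
  consider "t = 0" | "t > 0" | "t < 0" by linarith
  then show ?thesis
  proof cases
    case 1
    then show ?thesis using G \<open>(e, s) \<in> G\<close> unfolding norm_dominated_graph_def by simp
  next
    case 2
    have "norm (e + t *\<^sub>R y) = t * norm ((1/t) *\<^sub>R e + y)"
      using norm_scaleR[of t "(1/t) *\<^sub>R e + y"] 2 by (simp add: scaleR_add_right)
    moreover have "c \<le> norm ((1/t) *\<^sub>R e + y) - (1/t) * s" using c_upper[OF scaled] .
    then have "t * c \<le> t * norm ((1/t) *\<^sub>R e + y) - s" using 2 by (simp add: field_simps)
    ultimately show ?thesis by (simp add: mult.commute)
  next
    case 3
    have "norm (e + t *\<^sub>R y) = (-t) * norm (-(1/t) *\<^sub>R e - y)"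
      using norm_scaleR[of "-t" "-(1/t) *\<^sub>R e - y"] 3 by (simp add: scaleR_diff_right)
    moreover have "-(1/t) * s - norm (-(1/t) *\<^sub>R e - y) \<le> c" using c_lower[OF scaled] .
    then have "s - (-t) * norm (-(1/t) *\<^sub>R e - y) \<le> - t * c" using 3 by (simp add: field_simps)
    ultimately show ?thesis by (simp add: mult.commute)
  qed
qed

lemma norm_dominated_graph_extend:
  assumes G: "norm_dominated_graph G"
  shows "\<exists>G'. norm_dominated_graph G' \<and> G \<subseteq> G' \<and> (\<exists>c. (y, c) \<in> G')"
proof -
  have g0: "(0, 0) \<in> G"
    and gadd: "\<And>a s b t. (a, s) \<in> G \<Longrightarrow> (b, t) \<in> G \<Longrightarrow> (a + b, s + t) \<in> G"
    and gscale: "\<And>k a s. (a, s) \<in> G \<Longrightarrow> (k *\<^sub>R a, k * s) \<in> G"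
    using G unfolding norm_dominated_graph_def by blast+
  obtain c where c_lower: "\<And>b r. (b, r) \<in> G \<Longrightarrow> r - norm (b - y) \<le> c"
    and c_upper: "\<And>e s. (e, s) \<in> G \<Longrightarrow> c \<le> norm (e + y) - s"
    using norm_dominated_graph_separating_constant[OF G] by blast
  define G' where "G' = (\<lambda>((e, s), t). (e + t *\<^sub>R y, s + t * c)) ` (G \<times> UNIV)"
  have G'I: "(e + t *\<^sub>R y, s + t * c) \<in> G'" if "(e, s) \<in> G" for e s t
    unfolding G'_def using that by (intro image_eqI[of _ _ "((e, s), t)"]) auto
  have G'D: "\<exists>e r p. (e, r) \<in> G \<and> a = e + p *\<^sub>R y \<and> s = r + p * c" if "(a, s) \<in> G'" for a s
    using that unfolding G'_def by auto
  have "norm_dominated_graph G'"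
    unfolding norm_dominated_graph_def
  proof (intro conjI allI impI)
    show "(0, 0) \<in> G'" using G'I[OF g0, of 0] by simp
  next
    fix a s b t assume "(a, s) \<in> G'" "(b, t) \<in> G'"
    then obtain e r p e' r' p' where "(e, r) \<in> G" "(e', r') \<in> G"
      "a = e + p *\<^sub>R y" "s = r + p * c" "b = e' + p' *\<^sub>R y" "t = r' + p' * c"
      using G'D by metis
    then show "(a + b, s + t) \<in> G'"
      using G'I[OF gadd, of e r e' r' "p + p'"] by (simp add: algebra_simps)
  next
    fix k a s assume "(a, s) \<in> G'"
    then obtain e r p where "(e, r) \<in> G" "a = e + p *\<^sub>R y" "s = r + p * c"
      using G'D by blast
    then show "(k *\<^sub>R a, k * s) \<in> G'"
      using G'I[OF gscale, of e r k "k * p"] by (simp add: algebra_simps)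
  next
    fix a s assume "(a, s) \<in> G'"
    then show "s \<le> norm a"
      using G'D norm_dominated_graph_extension_dominated[OF G _ c_lower c_upper] by blast
  qed
  moreover have "G \<subseteq> G'" using G'I[of _ _ 0] by auto
  moreover have "(y, c) \<in> G'" using G'I[OF g0, of 1] by simp
  ultimately show ?thesis by blast
qed

lemma norm_dominated_graph_line:
  "norm_dominated_graph (range (\<lambda>c. (c *\<^sub>R x0, c * norm x0)))"
  unfolding norm_dominated_graph_def
proof (intro conjI allI impI)
  show "(0, 0) \<in> range (\<lambda>c. (c *\<^sub>R x0, c * norm x0))" by (rule image_eqI[of _ _ 0]) auto
  fix a s b t assume "(a, s) \<in> range (\<lambda>c. (c *\<^sub>R x0, c * norm x0))"
    "(b, t) \<in> range (\<lambda>c. (c *\<^sub>R x0, c * norm x0))"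
  then obtain c d where "a = c *\<^sub>R x0" "s = c * norm x0" "b = d *\<^sub>R x0" "t = d * norm x0"
    by auto
  then show "(a + b, s + t) \<in> range (\<lambda>c. (c *\<^sub>R x0, c * norm x0))"
    by (intro image_eqI[of _ _ "c + d"]) (auto simp: scaleR_add_left distrib_right)
next
  fix k a s assume "(a, s) \<in> range (\<lambda>c. (c *\<^sub>R x0, c * norm x0))"
  then show "(k *\<^sub>R a, k * s) \<in> range (\<lambda>c. (c *\<^sub>R x0, c * norm x0))"
    by (auto intro: image_eqI[of _ _ "k * _"])
next
  fix a s assume "(a, s) \<in> range (\<lambda>c. (c *\<^sub>R x0, c * norm x0))"
  then show "s \<le> norm a" by (auto simp: mult_right_mono)
qed

lemma norming_functional:
  fixes x0 :: "'a::real_normed_vector"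
  shows "\<exists>f. bounded_linear f \<and> (\<forall>y. \<bar>f y\<bar> \<le> norm y) \<and> f x0 = norm x0"
proof -
  define \<G> where "\<G> = {G. norm_dominated_graph G \<and> (x0, norm x0) \<in> G}"
  have "range (\<lambda>c. (c *\<^sub>R x0, c * norm x0)) \<in> \<G>"
    unfolding \<G>_def using norm_dominated_graph_line[of x0] by (auto intro: image_eqI[of _ _ 1])
  then have "\<exists>G\<in>\<G>. \<forall>H\<in>\<G>. G \<subseteq> H \<longrightarrow> H = G"
    by (intro subset_Zorn_nonempty)
      (auto simp: \<G>_def subset_chain_def intro!: norm_dominated_graph_Union)
  then obtain G where G: "norm_dominated_graph G" "(x0, norm x0) \<in> G"
    and maximal: "\<And>H. norm_dominated_graph H \<Longrightarrow> G \<subseteq> H \<Longrightarrow> H = G"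
    unfolding \<G>_def by blast
  have "\<exists>s. (a, s) \<in> G" for a
    using norm_dominated_graph_extend[OF G(1), of a] maximal by metis
  then obtain f where fG: "\<And>a. (a, f a) \<in> G" by metis
  have f_eq: "\<And>a s. (a, s) \<in> G \<Longrightarrow> f a = s"
    using norm_dominated_graph_unique[OF G(1) fG] by blast
  have add: "f (a + b) = f a + f b" and scale: "f (k *\<^sub>R a) = k * f a" and le: "f a \<le> norm a"
    for a b k
    using G(1) fG f_eq unfolding norm_dominated_graph_def by blast+
  have abs_le: "\<bar>f a\<bar> \<le> norm a" for a
    using le[of a] le[of "(-1) *\<^sub>R a"] scale[of "-1" a] by auto
  have "bounded_linear f"
    by (rule bounded_linear_intro[of f 1]) (use add scale abs_le in auto)
  then show ?thesis using abs_le f_eq[OF G(2)] by blast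
qed

section \<open>The optimality condition\<close>

lemma convex_on_powr_nonneg:
  assumes u: "u \<ge> 1"
  shows "convex_on {0..} (\<lambda>x::real. x powr u)"
proof (rule convex_on_linorderI)
  fix t x y :: real
  assume t: "0 < t" "t < 1" and xy: "x \<in> {0..}" "y \<in> {0..}" "x < y"
  show "((1 - t) *\<^sub>R x + t *\<^sub>R y) powr u \<le> (1 - t) * x powr u + t * y powr u"
  proof (cases "x = 0")
    case True
    have "(t * y) powr u = t powr u * y powr u" using t xy by (simp add: powr_mult)
    also have "\<dots> \<le> t powr 1 * y powr u"
      using powr_mono'[OF u, of t] t by (intro mult_right_mono) auto
    finally show ?thesis using True u t by simp
  next
    case False
    with xy have "x \<in> {0<..}" "y \<in> {0<..}" by auto
    then show ?thesis using convex_onD[OF powr_convex[OF u]] t by simp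
  qed
qed simp

lemma convex_on_regR:
  assumes u: "u \<ge> 1"
  shows "convex_on UNIV (regR u :: 'x::real_normed_vector \<Rightarrow> real)"
proof (rule convex_onI)
  fix t :: real and a b :: 'x
  assume t: "0 < t" "t < 1"
  have "norm ((1 - t) *\<^sub>R a + t *\<^sub>R b) \<le> (1 - t) * norm a + t * norm b"
    using norm_triangle_ineq[of "(1 - t) *\<^sub>R a" "t *\<^sub>R b"] t by simp
  then have "norm ((1 - t) *\<^sub>R a + t *\<^sub>R b) powr u \<le> ((1 - t) * norm a + t * norm b) powr u"
    using u by (intro powr_mono2) auto
  also have "\<dots> \<le> (1 - t) * norm a powr u + t * norm b powr u"
    using convex_onD[OF convex_on_powr_nonneg[OF u], of t "norm a" "norm b"] t by simp
  finally have "norm ((1 - t) *\<^sub>R a + t *\<^sub>R b) powr u / u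
      \<le> ((1 - t) * norm a powr u + t * norm b powr u) / u"
    using u by (intro divide_right_mono) auto
  then show "regR u ((1 - t) *\<^sub>R a + t *\<^sub>R b) \<le> (1 - t) * regR u a + t * regR u b"
    unfolding regR_def by (simp add: add_divide_distrib)
qed simp

lemma regR_nonneg: "u \<ge> 1 \<Longrightarrow> regR u x \<ge> 0"
  unfolding regR_def by simp

lemma norm_le_of_regR_le:
  assumes u: "u \<ge> 1" and "regR u z \<le> C"
  shows "norm z \<le> max 1 (u * C)"
proof (cases "norm z \<le> 1")
  case False
  then have "norm z \<le> norm z powr u" using powr_mono[OF u, of "norm z"] by simp
  also have "\<dots> \<le> u * C" using assms unfolding regR_def by (simp add: field_simps)
  finally show ?thesis by simp
qed simp

lemma tik_min_variational_ineq:
  fixes j :: "'x::real_normed_vector \<Rightarrow> 'xa::real_normed_vector"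
    and A :: "'xa \<Rightarrow> 'y::real_inner"
  assumes A: "bounded_linear A" and j: "bounded_linear j" and u: "u \<ge> 1" and \<alpha>: "\<alpha> > 0"
    and xa: "xa \<in> tik_min A j u \<alpha> g"
  shows "regR u xa + inner (g - A (j xa)) (A (j z) - A (j xa)) / \<alpha> \<le> regR u z"
proof -
  interpret A: bounded_linear A by fact
  interpret j: bounded_linear j by fact
  define r where "r = g - A (j xa)"
  define e where "e = A (j z) - A (j xa)"
  define K where "K = (norm e)\<^sup>2 / (2 * \<alpha>)"
  \<comment> \<open>Compare \<open>xa\<close> with the points \<open>(1 - t) xa + t z\<close> and let \<open>t \<rightarrow> 0\<close>.\<close>
  have step: "regR u xa + inner r e / \<alpha> \<le> regR u z + t * K" if t: "0 < t" "t < 1" for t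
  proof -
    define zt where "zt = (1 - t) *\<^sub>R xa + t *\<^sub>R z"
    have "A (j zt) = (1 - t) *\<^sub>R A (j xa) + t *\<^sub>R A (j z)"
      unfolding zt_def by (simp only: j.add j.scale A.add A.scale)
    then have residual: "g - A (j zt) = r - t *\<^sub>R e"
      unfolding r_def e_def by (simp add: algebra_simps)
    have "(norm (g - A (j zt)))\<^sup>2 = (norm r)\<^sup>2 - 2 * t * inner r e + t\<^sup>2 * (norm e)\<^sup>2"
      unfolding residual power2_norm_eq_inner
      by (simp add: inner_commute power2_eq_square algebra_simps)
    moreover have "(norm r)\<^sup>2 / (2 * \<alpha>) + regR u xa \<le> (norm (g - A (j zt)))\<^sup>2 / (2 * \<alpha>) + regR u zt"
      using xa unfolding tik_min_def r_def by blast
    moreover have "regR u zt \<le> (1 - t) * regR u xa + t * regR u z"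
      unfolding zt_def using convex_onD[OF convex_on_regR[OF u], of t xa z] t by simp
    ultimately have "(norm r)\<^sup>2 / (2 * \<alpha>) + regR u xa \<le>
        ((norm r)\<^sup>2 - 2 * t * inner r e + t\<^sup>2 * (norm e)\<^sup>2) / (2 * \<alpha>) + (1 - t) * regR u xa + t * regR u z"
      by simp
    then have "t * regR u xa + t * (inner r e / \<alpha>) \<le> t * regR u z + t * (t * K)"
      using \<alpha> unfolding K_def by (simp add: field_simps power2_eq_square)
    then have "t * (regR u xa + inner r e / \<alpha>) \<le> t * (regR u z + t * K)"
      by (simp add: algebra_simps)
    then show ?thesis using t by simp
  qed
  have "((\<lambda>t. regR u z + t * K) \<longlongrightarrow> regR u z) (at_right 0)"
    by (auto intro!: tendsto_eq_intros)
  moreover have "eventually (\<lambda>t. regR u xa + inner r e / \<alpha> \<le> regR u z + t * K) (at_right 0)"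
    using eventually_at_right_real[OF zero_less_one] by (rule eventually_mono) (auto intro: step)
  ultimately have "regR u xa + inner r e / \<alpha> \<le> regR u z"
    by (intro tendsto_lowerbound) auto
  then show ?thesis unfolding r_def e_def .
qed

lemma tik_residual_quotient_le_onorm:
  fixes j :: "'x::real_normed_vector \<Rightarrow> 'xa::real_normed_vector"
    and A :: "'xa \<Rightarrow> 'y::real_inner"
  assumes A: "bounded_linear A" and j: "bounded_linear j" and u: "u \<ge> 1" and M: "M > 0"
    and A_below: "\<And>y. norm y / M \<le> norm (A y)"
    and \<alpha>: "\<alpha> > 0" and xa: "xa \<in> tik_min A j u \<alpha> (A (j x))"
    and \<xi>: "bounded_linear \<xi>" and subgrad: "\<xi> \<circ> j \<in> subdiff_R u x"
  shows "norm (A (j x) - A (j xa)) / \<alpha> \<le> M * onorm \<xi>"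
proof -
  interpret A: bounded_linear A by fact
  interpret j: bounded_linear j by fact
  interpret \<xi>: bounded_linear \<xi> by fact
  define d where "d = A (j x) - A (j xa)"
  have "regR u xa + inner d d / \<alpha> \<le> regR u x"
    using tik_min_variational_ineq[OF A j u \<alpha> xa, of x] unfolding d_def .
  moreover have "regR u x + \<xi> (j (xa - x)) \<le> regR u xa"
    using subgrad unfolding subdiff_R_def by auto
  moreover have "\<xi> (j (xa - x)) = - \<xi> (j (x - xa))"
    by (metis minus_diff_eq j.neg \<xi>.neg)
  ultimately have "(norm d)\<^sup>2 / \<alpha> \<le> \<xi> (j (x - xa))"
    by (simp add: power2_norm_eq_inner)
  also have "\<dots> \<le> onorm \<xi> * norm (j (x - xa))"
    using onorm[OF \<xi>, of "j (x - xa)"] by simp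
  also have "\<dots> \<le> onorm \<xi> * (M * norm d)"
    using A_below[of "j (x - xa)"] M onorm_pos_le[OF \<xi>]
    by (intro mult_left_mono) (auto simp: d_def j.diff A.diff field_simps)
  finally have "norm d * (norm d / \<alpha>) \<le> norm d * (M * onorm \<xi>)"
    by (simp add: power2_eq_square algebra_simps)
  then show ?thesis
  proof (cases "d = 0")
    case True
    then show ?thesis using M onorm_pos_le[OF \<xi>] by (simp add: d_def)
  qed (simp add: mult_left_le_imp_le d_def)
qed

lemma tik_residual_quotient_gap:
  fixes j :: "'x::real_normed_vector \<Rightarrow> 'xa::real_normed_vector"
    and A :: "'xa \<Rightarrow> 'y::real_inner"
  assumes A: "bounded_linear A" and j: "bounded_linear j" and u: "u \<ge> 1"
    and a: "a > 0" and ab: "a \<le> b"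
    and xa: "xa \<in> tik_min A j u a g" and xb: "xb \<in> tik_min A j u b g"
  defines "wa \<equiv> (1 / a) *\<^sub>R (g - A (j xa))" and "wb \<equiv> (1 / b) *\<^sub>R (g - A (j xb))"
  shows "(norm (wa - wb))\<^sup>2 \<le> (norm wa)\<^sup>2 - (norm wb)\<^sup>2"
proof -
  have b: "b > 0" using a ab by simp
  have Axa: "A (j xa) = g - a *\<^sub>R wa" and Axb: "A (j xb) = g - b *\<^sub>R wb"
    unfolding wa_def wb_def using a b by simp_all
  have "regR u xa + inner wa (A (j xb) - A (j xa)) \<le> regR u xb"
    using tik_min_variational_ineq[OF A j u a xa, of xb] unfolding wa_def by simp
  moreover have "regR u xb + inner wb (A (j xa) - A (j xb)) \<le> regR u xa"
    using tik_min_variational_ineq[OF A j u b xb, of xa] unfolding wb_def by simp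
  ultimately have "inner (wa - wb) (a *\<^sub>R wa - b *\<^sub>R wb) \<le> 0"
    unfolding Axa Axb by (simp add: algebra_simps)
  then have key: "(a + b) * (norm (wa - wb))\<^sup>2 \<le> (b - a) * ((norm wa)\<^sup>2 - (norm wb)\<^sup>2)"
    unfolding power2_norm_eq_inner
    by (simp add: inner_commute algebra_simps)
  show ?thesis
  proof (cases "a = b")
    case True
    then have "(norm (wa - wb))\<^sup>2 \<le> 0" using key a by (simp add: mult_le_0_iff)
    then show ?thesis by simp
  next
    case False
    then have "0 \<le> (b - a) * ((norm wa)\<^sup>2 - (norm wb)\<^sup>2)"
      using key a ab by (smt (verit) zero_le_mult_iff zero_le_power2)
    then have "(b - a) * ((norm wa)\<^sup>2 - (norm wb)\<^sup>2) \<le> (a + b) * ((norm wa)\<^sup>2 - (norm wb)\<^sup>2)"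
      using a ab False by (intro mult_right_mono) (auto simp: zero_le_mult_iff)
    then show ?thesis using key a b by (smt (verit) mult_le_cancel_left_pos)
  qed
qed

lemma Cauchy_of_norm_gap:
  fixes w :: "nat \<Rightarrow> 'a::real_normed_vector"
  assumes gap: "\<And>m n. n \<le> m \<Longrightarrow> (norm (w m - w n))\<^sup>2 \<le> (norm (w m))\<^sup>2 - (norm (w n))\<^sup>2"
    and bounded: "\<And>n. norm (w n) \<le> r"
  shows "Cauchy w"
proof (rule metric_CauchyI)
  define p where "p n = (norm (w n))\<^sup>2" for n
  have "incseq p"
    unfolding incseq_def p_def by (smt (verit) gap zero_le_power2)
  moreover have "p n \<le> r\<^sup>2" for n
    unfolding p_def using bounded[of n] by (intro power_mono) auto
  ultimately have "Cauchy p"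
    using incseq_convergent[of p "r\<^sup>2"] by (metis convergentI convergent_Cauchy)
  fix e :: real assume "0 < e"
  then obtain N where N: "\<And>m n. m \<ge> N \<Longrightarrow> n \<ge> N \<Longrightarrow> dist (p m) (p n) < e\<^sup>2"
    using metric_CauchyD[OF \<open>Cauchy p\<close>, of "e\<^sup>2"] by auto
  have close: "dist (w m) (w n) < e" if "n \<ge> N" "n \<le> m" for m n
  proof -
    have "(norm (w m - w n))\<^sup>2 < e\<^sup>2"
      using gap[OF that(2)] N[of m n] that unfolding p_def by (simp add: dist_real_def)
    then show ?thesis using \<open>0 < e\<close> by (simp add: dist_norm power_less_imp_less_base)
  qed
  show "\<exists>N. \<forall>m\<ge>N. \<forall>n\<ge>N. dist (w m) (w n) < e"
    by (metis close dist_commute nat_le_linear)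
qed

section \<open>Weak limits along an ultrafilter\<close>

text \<open>The two consequences of the compactness hypothesis that the argument uses:
  weak convergence of \<open>A \<circ> j\<close> along \<open>U\<close> and lower semicontinuity of \<open>regR u\<close> along \<open>U\<close>.\<close>
definition weak_ultralimit ::
  "('xa::real_normed_vector \<Rightarrow> 'y::real_inner) \<Rightarrow> ('x::real_normed_vector \<Rightarrow> 'xa) \<Rightarrow> real
     \<Rightarrow> nat filter \<Rightarrow> (nat \<Rightarrow> 'x) \<Rightarrow> 'x \<Rightarrow> bool" where
  "weak_ultralimit A j u U z zs \<longleftrightarrow>
     (\<forall>v. ((\<lambda>k. inner v (A (j (z k)))) \<longlongrightarrow> inner v (A (j zs))) U)
     \<and> (\<forall>c. eventually (\<lambda>k. regR u (z k) \<le> c) U \<longrightarrow> regR u zs \<le> c)"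

lemma compactin_ultrafilter_limitin:
  assumes U: "free_ultrafilter U" and K: "compactin X K" and z: "\<And>k. z k \<in> K"
  shows "\<exists>zs\<in>K. limitin X z zs U"
proof -
  have "U \<noteq> bot" using U unfolding free_ultrafilter_def by blast
  define \<C> where "\<C> = {C. closedin X C \<and> eventually (\<lambda>k. z k \<in> C) U}"
  have "K \<inter> \<Inter>\<F> \<noteq> {}" if "finite \<F>" "\<F> \<subseteq> \<C>" for \<F>
  proof -
    have "eventually (\<lambda>k. \<forall>C\<in>\<F>. z k \<in> C) U"
      using that by (intro eventually_ball_finite) (auto simp: \<C>_def)
    then obtain k where "\<forall>C\<in>\<F>. z k \<in> C" using eventually_happens'[OF \<open>U \<noteq> bot\<close>] by blast
    then show ?thesis using z[of k] by blast
  qed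
  moreover have "\<forall>C\<in>\<C>. closedin X C" by (simp add: \<C>_def)
  ultimately have "K \<inter> \<Inter>\<C> \<noteq> {}"
    using K unfolding compactin_fip by blast
  then obtain zs where zs: "zs \<in> K" "\<And>C. C \<in> \<C> \<Longrightarrow> zs \<in> C" by blast
  have "K \<subseteq> topspace X" using K by (rule compactin_subset_topspace)
  have "eventually (\<lambda>k. z k \<in> N) U" if "openin X N" "zs \<in> N" for N
  proof (rule ccontr)
    assume "\<not> eventually (\<lambda>k. z k \<in> N) U"
    then have "eventually (\<lambda>k. z k \<notin> N) U" using U unfolding free_ultrafilter_def by blast
    then have "eventually (\<lambda>k. z k \<in> topspace X - N) U"
      by (rule eventually_mono) (use z \<open>K \<subseteq> topspace X\<close> in blast)
    then have "topspace X - N \<in> \<C>" using that by (auto simp: \<C>_def)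
    then show False using zs(2) that by blast
  qed
  then show ?thesis using zs(1) \<open>K \<subseteq> topspace X\<close> unfolding limitin_def by blast
qed

lemma limitin_continuous_map_compose:
  assumes "continuous_map X Y f" and "limitin X z l F"
  shows "limitin Y (\<lambda>k. f (z k)) (f l) F"
  unfolding limitin_def
proof (intro conjI allI impI)
  show "f l \<in> topspace Y"
    using continuous_map_image_subset_topspace[OF assms(1)] limitin_topspace[OF assms(2)] by blast
  fix N assume "openin Y N \<and> f l \<in> N"
  then have "openin X {x \<in> topspace X. f x \<in> N}" "l \<in> {x \<in> topspace X. f x \<in> N}"
    using assms by (auto intro: openin_continuous_map_preimage dest: limitin_topspace)
  then show "eventually (\<lambda>k. f (z k) \<in> N) F"
    using assms(2) by (auto dest: limitinD elim: eventually_mono)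
qed

lemma limitin_weak_top_inner:
  assumes "limitin weak_top y l F"
  shows "((\<lambda>k. inner v (y k)) \<longlongrightarrow> inner v l) F"
  unfolding tendsto_def
proof (intro allI impI)
  fix S :: "real set" assume S: "open S" "inner v l \<in> S"
  have "openin weak_top ((\<lambda>y. inner y v) -` S)"
    unfolding weak_top_def using S(1) by (intro topology_generated_by_Basis) blast
  moreover have "l \<in> (\<lambda>y. inner y v) -` S" using S(2) by (simp add: inner_commute)
  ultimately have "eventually (\<lambda>k. y k \<in> (\<lambda>y. inner y v) -` S) F" by (rule limitinD[OF assms])
  then show "eventually (\<lambda>k. inner v (y k) \<in> S) F"
    by (rule eventually_mono) (simp add: inner_commute)
qed

lemma weak_ultralimit_admissible:
  assumes adm: "admissible_topology A j u \<tau>" and U: "free_ultrafilter U"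
    and bounded: "\<And>k. regR u (z k) \<le> C"
  shows "\<exists>zs. weak_ultralimit A j u U z zs"
proof -
  have haus: "Hausdorff_space \<tau>" and compact: "\<And>c. compactin \<tau> {x. regR u x \<le> c}"
    and cont: "continuous_map \<tau> weak_top (\<lambda>x. A (j x))"
    using adm unfolding admissible_topology_def locally_convex_Hausdorff_def by blast+
  obtain zs where zs: "limitin \<tau> z zs U"
    using compactin_ultrafilter_limitin[OF U compact[of C]] bounded by blast
  have "((\<lambda>k. inner v (A (j (z k)))) \<longlongrightarrow> inner v (A (j zs))) U" for v
    by (rule limitin_weak_top_inner[OF limitin_continuous_map_compose[OF cont zs]])
  moreover have "regR u zs \<le> c" if "eventually (\<lambda>k. regR u (z k) \<le> c) U" for c
    using limitin_closedin[OF zs compactin_imp_closedin[OF haus compact[of c]]] that U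
    unfolding free_ultrafilter_def by simp
  ultimately show ?thesis unfolding weak_ultralimit_def by blast
qed

text \<open>In a reflexive space the functional \<open>f \<mapsto> lim\<^sub>U f (z k)\<close> on the dual is evaluation
  at some point.\<close>
lemma reflexive_ultralimit:
  fixes z :: "nat \<Rightarrow> 'x::real_normed_vector"
  assumes refl: "reflexive_space TYPE('x)" and U: "free_ultrafilter U"
    and bounded: "\<And>k. norm (z k) \<le> B"
  shows "\<exists>zs. \<forall>f :: 'x \<Rightarrow> real. bounded_linear f \<longrightarrow> ((\<lambda>k. f (z k)) \<longlongrightarrow> f zs) U"
proof -
  have "U \<noteq> bot" using U unfolding free_ultrafilter_def by blast
  have f_bound: "\<bar>f (z k)\<bar> \<le> B * onorm f" if "bounded_linear f" for f :: "'x \<Rightarrow> real" and k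
  proof -
    have "\<bar>f (z k)\<bar> \<le> onorm f * norm (z k)" using onorm[OF that] by simp
    also have "\<dots> \<le> onorm f * B" by (rule mult_left_mono[OF bounded onorm_pos_le[OF that]])
    finally show ?thesis by (simp add: mult.commute)
  qed
  define \<Phi> where "\<Phi> f = Lim U (\<lambda>k. f (z k))" for f :: "'x \<Rightarrow> real"
  have \<Phi>: "((\<lambda>k. f (z k)) \<longlongrightarrow> \<Phi> f) U" if f: "bounded_linear f" for f
  proof -
    obtain L where "((\<lambda>k. f (z k)) \<longlongrightarrow> L) U"
      using free_ultrafilter_limit_bounded[OF U, of "\<lambda>k. f (z k)"] f_bound[OF f] by blast
    then show ?thesis using \<open>U \<noteq> bot\<close> by (simp add: \<Phi>_def tendsto_Lim)
  qed
  have \<Phi>_eq: "\<Phi> f = L" if "bounded_linear f" "((\<lambda>k. f (z k)) \<longlongrightarrow> L) U" for f L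
    using tendsto_unique[OF \<open>U \<noteq> bot\<close> \<Phi>[OF that(1)] that(2)] .
  have bidual: "(\<forall>f g. bounded_linear f \<longrightarrow> bounded_linear g \<longrightarrow> \<Phi> (\<lambda>x. f x + g x) = \<Phi> f + \<Phi> g)
      \<and> (\<forall>c f. bounded_linear f \<longrightarrow> \<Phi> (\<lambda>x. c * f x) = c * \<Phi> f)
      \<and> (\<exists>C. \<forall>f. bounded_linear f \<longrightarrow> \<bar>\<Phi> f\<bar> \<le> C * onorm f)"
  proof (intro conjI allI impI exI[of _ B])
    fix f g :: "'x \<Rightarrow> real" assume "bounded_linear f" "bounded_linear g"
    then show "\<Phi> (\<lambda>x. f x + g x) = \<Phi> f + \<Phi> g"
      by (intro \<Phi>_eq bounded_linear_add tendsto_add \<Phi>)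
  next
    fix c and f :: "'x \<Rightarrow> real" assume "bounded_linear f"
    then show "\<Phi> (\<lambda>x. c * f x) = c * \<Phi> f"
      by (intro \<Phi>_eq bounded_linear_const_mult tendsto_mult_left \<Phi>)
  next
    fix f :: "'x \<Rightarrow> real" assume f: "bounded_linear f"
    show "\<bar>\<Phi> f\<bar> \<le> B * onorm f"
      using f_bound[OF f] \<open>U \<noteq> bot\<close>
      by (intro tendsto_le[OF _ tendsto_const tendsto_rabs[OF \<Phi>[OF f]]]) auto
  qed
  obtain zs where "\<And>f. bounded_linear f \<Longrightarrow> \<Phi> f = f zs"
    using refl[unfolded reflexive_space_def, THEN spec[of _ \<Phi>], THEN mp, OF bidual] by blast
  then show ?thesis using \<Phi> by (intro exI[of _ zs]) auto
qed

lemma norm_le_of_weak_ultralimit: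
  fixes z :: "nat \<Rightarrow> 'x::real_normed_vector"
  assumes "U \<noteq> bot"
    and weak: "\<And>f :: 'x \<Rightarrow> real. bounded_linear f \<Longrightarrow> ((\<lambda>k. f (z k)) \<longlongrightarrow> f zs) U"
    and norms: "((\<lambda>k. norm (z k)) \<longlongrightarrow> l) U"
  shows "norm zs \<le> l"
proof -
  obtain f where f: "bounded_linear f" "\<And>y. \<bar>f y\<bar> \<le> norm y" "f zs = norm zs"
    using norming_functional[of zs] by blast
  show ?thesis
    using weak[OF f(1)] f(2,3) \<open>U \<noteq> bot\<close>
    by (intro tendsto_le[OF _ norms]) (auto simp: abs_le_iff)
qed

lemma weak_ultralimit_reflexive:
  fixes A :: "'xa::real_normed_vector \<Rightarrow> 'y::real_inner" and j :: "'x::real_normed_vector \<Rightarrow> 'xa"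
  assumes A: "bounded_linear A" and j: "bounded_linear j" and u: "u \<ge> 1"
    and refl: "reflexive_space TYPE('x)" and U: "free_ultrafilter U"
    and bounded: "\<And>k. regR u (z k) \<le> C"
  shows "\<exists>zs. weak_ultralimit A j u U z zs"
proof -
  have "U \<noteq> bot" using U unfolding free_ultrafilter_def by blast
  have norm_bound: "norm (z k) \<le> max 1 (u * C)" for k by (rule norm_le_of_regR_le[OF u bounded])
  obtain zs where zs: "\<And>f :: 'x \<Rightarrow> real. bounded_linear f \<Longrightarrow> ((\<lambda>k. f (z k)) \<longlongrightarrow> f zs) U"
    using reflexive_ultralimit[OF refl U, of z] norm_bound by blast
  have "((\<lambda>k. inner v (A (j (z k)))) \<longlongrightarrow> inner v (A (j zs))) U" for v
    using zs[OF bounded_linear_compose[OF bounded_linear_inner_right bounded_linear_compose[OF A j]]]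
    by simp
  moreover have "regR u zs \<le> c" if ev: "eventually (\<lambda>k. regR u (z k) \<le> c) U" for c
  proof -
    obtain l where l: "((\<lambda>k. norm (z k)) \<longlongrightarrow> l) U"
      using free_ultrafilter_limit_bounded[OF U, of "\<lambda>k. norm (z k)"] norm_bound by auto
    have "norm zs \<le> l" by (rule norm_le_of_weak_ultralimit[OF \<open>U \<noteq> bot\<close> zs l])
    then have "norm zs powr u / u \<le> l powr u / u"
      using u by (intro divide_right_mono powr_mono2) auto
    also have "\<dots> \<le> c"
    proof (rule tendsto_upperbound)
      show "((\<lambda>k. norm (z k) powr u / u) \<longlongrightarrow> l powr u / u) U"
        using u by (intro tendsto_divide tendsto_powr2[OF l tendsto_const]) auto
    qed (use ev \<open>U \<noteq> bot\<close> in \<open>simp_all add: regR_def\<close>)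
    finally show ?thesis unfolding regR_def .
  qed
  ultimately show ?thesis unfolding weak_ultralimit_def by blast
qed

lemma norm_le_of_inner_limit:
  fixes y :: "'b \<Rightarrow> 'a::real_inner"
  assumes "F \<noteq> bot" and weak: "((\<lambda>k. inner l (y k)) \<longlongrightarrow> inner l l) F"
    and norms: "((\<lambda>k. norm (y k)) \<longlongrightarrow> a) F"
  shows "norm l \<le> a"
proof -
  have "0 \<le> a" by (rule tendsto_lowerbound[OF norms _ \<open>F \<noteq> bot\<close>]) simp
  have "inner l l \<le> norm l * a"
    by (rule tendsto_le[OF \<open>F \<noteq> bot\<close> tendsto_mult_left[OF norms] weak])
      (simp add: norm_cauchy_schwarz)
  then have "norm l * norm l \<le> norm l * a" by (simp add: power2_eq_square[symmetric] power2_norm_eq_inner)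
  show ?thesis
  proof (cases "l = 0")
    case False
    then show ?thesis using mult_left_le_imp_le[OF \<open>norm l * norm l \<le> norm l * a\<close>] by simp
  qed (simp add: \<open>0 \<le> a\<close>)
qed

lemma regR_le_of_weak_ultralimit:
  assumes "weak_ultralimit A j u U z zs" and "((\<lambda>k. regR u (z k)) \<longlongrightarrow> b) U"
  shows "regR u zs \<le> b"
proof (rule field_le_epsilon)
  fix e :: real assume "0 < e"
  then have "eventually (\<lambda>k. regR u (z k) < b + e) U"
    using order_tendstoD(2)[OF assms(2), of "b + e"] by simp
  then have "eventually (\<lambda>k. regR u (z k) \<le> b + e) U" by (rule eventually_mono) simp
  then show "regR u zs \<le> b + e" using assms(1) unfolding weak_ultralimit_def by simp
qed

lemma norm_residual_le_of_weak_ultralimit: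
  assumes zs: "weak_ultralimit A j u U z zs" and "U \<noteq> bot"
    and a: "((\<lambda>k. norm (g - A (j (z k)))) \<longlongrightarrow> a) U"
  shows "norm (g - A (j zs)) \<le> a"
proof (rule norm_le_of_inner_limit[OF \<open>U \<noteq> bot\<close> _ a])
  define d where "d = g - A (j zs)"
  have "((\<lambda>k. inner d g - inner d (A (j (z k)))) \<longlongrightarrow> inner d g - inner d (A (j zs))) U"
    using zs unfolding weak_ultralimit_def by (intro tendsto_diff tendsto_const) simp
  then show "((\<lambda>k. inner d (g - A (j (z k)))) \<longlongrightarrow> inner d d) U"
    by (simp add: d_def inner_diff_right)
qed

section \<open>Existence of minimisers\<close>

lemma minimizing_sequence:
  fixes F :: "'a \<Rightarrow> real"
  assumes "bdd_below (range F)"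
  shows "\<exists>z. (\<lambda>k. F (z k)) \<longlonglongrightarrow> Inf (range F)"
proof -
  define m where "m = Inf (range F)"
  have "\<exists>z. F z < m + 1 / Suc k" for k
  proof -
    have "Inf (range F) < m + 1 / Suc k" unfolding m_def by simp
    then show ?thesis using cInf_less_iff[OF _ assms] by blast
  qed
  then obtain z where z: "\<And>k. F (z k) < m + 1 / Suc k" by metis
  have "(\<lambda>k. F (z k)) \<longlonglongrightarrow> m"
  proof (rule tendsto_sandwich[of "\<lambda>_. m" _ _ "\<lambda>k. m + 1 / Suc k"])
    show "eventually (\<lambda>k. m \<le> F (z k)) sequentially"
      unfolding m_def using assms by (simp add: cInf_lower)
    show "eventually (\<lambda>k. F (z k) \<le> m + 1 / Suc k) sequentially"
      using z by (simp add: less_imp_le)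
    show "(\<lambda>k. m + 1 / real (Suc k)) \<longlonglongrightarrow> m"
      using tendsto_add[OF tendsto_const[of m] LIMSEQ_inverse_real_of_nat]
      by (simp add: inverse_eq_divide)
  qed simp
  then show ?thesis unfolding m_def by blast
qed

locale tikhonov_compact =
  fixes A :: "'xa::real_normed_vector \<Rightarrow> 'y::real_inner"
    and j :: "'x::real_normed_vector \<Rightarrow> 'xa"
    and u :: real
  assumes A: "bounded_linear A" and j: "bounded_linear j" and u: "u \<ge> 1"
    and compactness: "reflexive_space TYPE('x) \<or> (\<exists>\<tau>. admissible_topology A j u \<tau>)"
begin

lemma exists_weak_ultralimit:
  assumes U: "free_ultrafilter U" and bounded: "\<And>k. regR u (z k) \<le> C"
  shows "\<exists>zs. weak_ultralimit A j u U z zs"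
  using compactness
proof
  assume "reflexive_space TYPE('x)"
  then show ?thesis using weak_ultralimit_reflexive[OF A j u _ U, where z = z and C = C] bounded
    by blast
next
  assume "\<exists>\<tau>. admissible_topology A j u \<tau>"
  then show ?thesis using weak_ultralimit_admissible[OF _ U, where z = z and C = C] bounded
    by blast
qed

lemma tik_min_nonempty:
  assumes \<alpha>: "\<alpha> > 0"
  shows "tik_min A j u \<alpha> g \<noteq> {}"
proof -
  define F where "F z = (norm (g - A (j z)))\<^sup>2 / (2 * \<alpha>) + regR u z" for z
  have F_nonneg: "0 \<le> F z" for z
    unfolding F_def using \<alpha> regR_nonneg[OF u] by (intro add_nonneg_nonneg divide_nonneg_pos) auto
  define m where "m = Inf (range F)"
  have "bdd_below (range F)" using F_nonneg by (intro bdd_belowI[of _ 0]) auto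
  then have m_le: "m \<le> F z" for z unfolding m_def by (simp add: cInf_lower)
  obtain z where "(\<lambda>k. F (z k)) \<longlonglongrightarrow> m"
    using minimizing_sequence[OF \<open>bdd_below (range F)\<close>] unfolding m_def by blast
  then have "bdd_above (range (\<lambda>k. F (z k)))"
    by (intro Bseq_bdd_above convergent_imp_Bseq convergentI)
  then obtain B where B: "\<And>k. F (z k) \<le> B" unfolding bdd_above_def by blast
  obtain U where U: "free_ultrafilter U" using exists_free_ultrafilter by blast
  then have "U \<noteq> bot" and "U \<le> sequentially" unfolding free_ultrafilter_def by auto
  have "((\<lambda>k. F (z k)) \<longlongrightarrow> m) U"
    using \<open>(\<lambda>k. F (z k)) \<longlonglongrightarrow> m\<close> \<open>U \<le> sequentially\<close> by (rule tendsto_mono[rotated])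
  have residual_bound: "\<bar>norm (g - A (j (z k)))\<bar> \<le> sqrt (2 * \<alpha> * B)"
    and regR_bound: "\<bar>regR u (z k)\<bar> \<le> B" for k
  proof -
    have "0 \<le> (norm (g - A (j (z k))))\<^sup>2 / (2 * \<alpha>)" "0 \<le> regR u (z k)"
      using \<alpha> regR_nonneg[OF u] by simp_all
    then have "(norm (g - A (j (z k))))\<^sup>2 / (2 * \<alpha>) \<le> B" "\<bar>regR u (z k)\<bar> \<le> B"
      using B[of k] unfolding F_def by linarith+
    then show "\<bar>norm (g - A (j (z k)))\<bar> \<le> sqrt (2 * \<alpha> * B)" "\<bar>regR u (z k)\<bar> \<le> B"
      using \<alpha> by (simp_all add: real_le_rsqrt pos_divide_le_eq mult.commute)
  qed
  obtain zs where zs: "weak_ultralimit A j u U z zs"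
    using exists_weak_ultralimit[OF U, of z B] regR_bound by (auto simp: abs_le_iff)
  obtain a where a: "((\<lambda>k. norm (g - A (j (z k)))) \<longlongrightarrow> a) U"
    using free_ultrafilter_limit_bounded[OF U, of "\<lambda>k. norm (g - A (j (z k)))"] residual_bound
    by blast
  obtain b where b: "((\<lambda>k. regR u (z k)) \<longlongrightarrow> b) U"
    using free_ultrafilter_limit_bounded[OF U, of "\<lambda>k. regR u (z k)"] regR_bound by blast
  have "((\<lambda>k. F (z k)) \<longlongrightarrow> a\<^sup>2 / (2 * \<alpha>) + b) U"
    unfolding F_def using \<alpha> by (intro tendsto_intros a b) auto
  then have m_eq: "m = a\<^sup>2 / (2 * \<alpha>) + b"
    using tendsto_unique[OF \<open>U \<noteq> bot\<close> \<open>((\<lambda>k. F (z k)) \<longlongrightarrow> m) U\<close>] by blast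
  have "norm (g - A (j zs)) \<le> a" by (rule norm_residual_le_of_weak_ultralimit[OF zs \<open>U \<noteq> bot\<close> a])
  then have "(norm (g - A (j zs)))\<^sup>2 / (2 * \<alpha>) \<le> a\<^sup>2 / (2 * \<alpha>)"
    using \<alpha> by (intro divide_right_mono power_mono) auto
  moreover have "regR u zs \<le> b" by (rule regR_le_of_weak_ultralimit[OF zs b])
  ultimately have "F zs \<le> F z'" for z' using m_le[of z'] unfolding m_eq F_def by linarith
  then have "zs \<in> tik_min A j u \<alpha> g" unfolding tik_min_def F_def by blast
  then show ?thesis by blast
qed

lemma rho1_nonneg: "rho1 A j u x \<ge> 0"
proof -
  obtain xa where xa: "xa \<in> tik_min A j u 1 (A (j x))" using tik_min_nonempty[of 1] by auto
  have "ereal (norm (A (j x) - A (j xa)) / 1) \<le> rho1 A j u x"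
    unfolding rho1_def
    by (rule Sup_upper) (use xa in \<open>intro CollectI exI[of _ "1::real"] exI[of _ xa]; simp\<close>)
  then show ?thesis by (rule order_trans[rotated]) simp
qed

end

section \<open>Subgradients from scaled residuals\<close>

lemma (in tikhonov_compact) regR_le_of_limit:
  assumes inj: "inj (\<lambda>x. A (j x))"
    and conv: "(\<lambda>n. A (j (xs n))) \<longlonglongrightarrow> A (j x)"
    and bounded: "\<And>n. regR u (xs n) \<le> C"
    and ev: "eventually (\<lambda>n. regR u (xs n) \<le> c) sequentially"
  shows "regR u x \<le> c"
proof -
  obtain U where U: "free_ultrafilter U" using exists_free_ultrafilter by blast
  then have "U \<noteq> bot" and "U \<le> sequentially" unfolding free_ultrafilter_def by auto
  obtain zs where zs: "weak_ultralimit A j u U xs zs"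
    using exists_weak_ultralimit[OF U, of xs C] bounded by blast
  have "inner v (A (j zs)) = inner v (A (j x))" for v
  proof (rule tendsto_unique[OF \<open>U \<noteq> bot\<close>])
    show "((\<lambda>k. inner v (A (j (xs k)))) \<longlongrightarrow> inner v (A (j zs))) U"
      using zs unfolding weak_ultralimit_def by simp
    show "((\<lambda>k. inner v (A (j (xs k)))) \<longlongrightarrow> inner v (A (j x))) U"
      using tendsto_inner[OF tendsto_const conv] \<open>U \<le> sequentially\<close> by (rule tendsto_mono[rotated])
  qed
  then have "inner (A (j zs) - A (j x)) (A (j zs) - A (j x)) = 0"
    by (simp add: inner_diff_right)
  then have "zs = x" using injD[OF inj, of zs x] by simp
  moreover have "eventually (\<lambda>n. regR u (xs n) \<le> c) U"
    using ev \<open>U \<le> sequentially\<close> by (rule filter_leD[rotated])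
  ultimately show ?thesis using zs unfolding weak_ultralimit_def by simp
qed

lemma LIMSEQ_of_scaled_differences:
  fixes b :: "nat \<Rightarrow> 'a::real_normed_vector"
  assumes "(\<lambda>n. real (Suc n) *\<^sub>R (a - b n)) \<longlonglongrightarrow> w"
  shows "b \<longlonglongrightarrow> a"
proof -
  have "(\<lambda>n. 1 / real (Suc n)) \<longlonglongrightarrow> 0"
    using LIMSEQ_inverse_real_of_nat by (simp add: inverse_eq_divide)
  then have "(\<lambda>n. a - (1 / Suc n) *\<^sub>R (real (Suc n) *\<^sub>R (a - b n))) \<longlonglongrightarrow> a - 0 *\<^sub>R w"
    by (intro tendsto_diff tendsto_const tendsto_scaleR assms)
  then show ?thesis by simp
qed

lemma onorm_inner_compose_le:
  fixes A :: "'a::real_normed_vector \<Rightarrow> 'b::real_inner"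
  assumes "M \<ge> 0" and A_above: "\<And>y. norm (A y) \<le> M * norm y"
  shows "onorm (\<lambda>y. inner w (A y)) \<le> M * norm w"
proof (rule onorm_bound)
  show "0 \<le> M * norm w" using \<open>M \<ge> 0\<close> by simp
  fix y
  have "norm (inner w (A y)) \<le> norm w * norm (A y)" using Cauchy_Schwarz_ineq2 by simp
  also have "\<dots> \<le> norm w * (M * norm y)" using A_above by (simp add: mult_left_mono)
  finally show "norm (inner w (A y)) \<le> M * norm w * norm y" by (simp add: algebra_simps)
qed

lemma (in tikhonov_compact) regR_subgradient_ineq_of_limit:
  assumes inj: "inj (\<lambda>x. A (j x))"
    and conv: "(\<lambda>n. A (j (xs n))) \<longlonglongrightarrow> A (j x)"
    and bounded: "\<And>n. regR u (xs n) \<le> C"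
    and subgrad: "\<And>n z. regR u (xs n) + inner (w n) (A (j z) - A (j (xs n))) \<le> regR u z"
    and w: "w \<longlonglongrightarrow> wL"
  shows "regR u x + inner wL (A (j z) - A (j x)) \<le> regR u z"
proof -
  define L where "L = inner wL (A (j z) - A (j x))"
  have "(\<lambda>n. inner (w n) (A (j z) - A (j (xs n)))) \<longlonglongrightarrow> L"
    unfolding L_def using w conv by (intro tendsto_intros)
  have "regR u x \<le> regR u z - L + e" if "e > 0" for e
  proof (rule regR_le_of_limit[OF inj conv bounded])
    have "eventually (\<lambda>n. L - e < inner (w n) (A (j z) - A (j (xs n)))) sequentially"
      using order_tendstoD(1)[OF \<open>_ \<longlonglongrightarrow> L\<close>, of "L - e"] that by simp
    then show "eventually (\<lambda>n. regR u (xs n) \<le> regR u z - L + e) sequentially"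
      by (rule eventually_mono) (use subgrad in \<open>smt (verit)\<close>)
  qed
  then have "regR u x \<le> regR u z - L" by (rule field_le_epsilon)
  then show ?thesis unfolding L_def by simp
qed

lemma tik_scaled_residuals_converge:
  fixes A :: "'xa::real_normed_vector \<Rightarrow> 'y::{real_inner, complete_space}"
    and j :: "'x::real_normed_vector \<Rightarrow> 'xa"
  assumes T: "tikhonov_compact A j u" and rho: "rho1 A j u x \<le> ereal r"
  obtains xs wL where "\<And>n. xs n \<in> tik_min A j u (1 / Suc n) (A (j x))"
    and "(\<lambda>n. real (Suc n) *\<^sub>R (A (j x) - A (j (xs n)))) \<longlonglongrightarrow> wL" and "norm wL \<le> r"
proof -
  interpret tikhonov_compact A j u by fact
  define \<alpha> where "\<alpha> n = 1 / real (Suc n)" for n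
  have \<alpha>_pos: "\<alpha> n > 0" for n unfolding \<alpha>_def by simp
  have "\<exists>xa. xa \<in> tik_min A j u (\<alpha> n) (A (j x))" for n
    using tik_min_nonempty[OF \<alpha>_pos] by blast
  then obtain xs where xs: "\<And>n. xs n \<in> tik_min A j u (\<alpha> n) (A (j x))" by metis
  define w where "w n = (1 / \<alpha> n) *\<^sub>R (A (j x) - A (j (xs n)))" for n
  have w_le: "norm (w n) \<le> r" for n
  proof -
    have "ereal (norm (A (j x) - A (j (xs n))) / \<alpha> n) \<le> rho1 A j u x"
      unfolding rho1_def using xs \<alpha>_pos by (intro Sup_upper) blast
    then have "ereal (norm (A (j x) - A (j (xs n))) / \<alpha> n) \<le> ereal r" using rho by (rule order_trans)
    then show ?thesis using \<alpha>_pos[of n] unfolding w_def by (simp add: divide_inverse mult.commute)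
  qed
  have "Cauchy w"
  proof (rule Cauchy_of_norm_gap[OF _ w_le])
    fix m n :: nat assume "n \<le> m"
    then have "\<alpha> m \<le> \<alpha> n" unfolding \<alpha>_def by (simp add: frac_le)
    then show "(norm (w m - w n))\<^sup>2 \<le> (norm (w m))\<^sup>2 - (norm (w n))\<^sup>2"
      unfolding w_def by (rule tik_residual_quotient_gap[OF A j u \<alpha>_pos _ xs xs])
  qed
  then obtain wL where "w \<longlonglongrightarrow> wL" unfolding Cauchy_convergent_iff convergent_def by blast
  moreover have "norm wL \<le> r"
    using w_le by (intro tendsto_le[OF _ tendsto_const tendsto_norm[OF \<open>w \<longlonglongrightarrow> wL\<close>]]) auto
  moreover have "w = (\<lambda>n. real (Suc n) *\<^sub>R (A (j x) - A (j (xs n))))"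
    unfolding w_def \<alpha>_def by simp
  ultimately show thesis using that xs unfolding \<alpha>_def by blast
qed

lemma exists_subgradient_onorm_le:
  fixes A :: "'xa::real_normed_vector \<Rightarrow> 'y::{real_inner, complete_space}"
    and j :: "'x::real_normed_vector \<Rightarrow> 'xa"
  assumes T: "tikhonov_compact A j u" and M: "M > 0"
    and A_above: "\<And>y. norm (A y) \<le> M * norm y" and inj: "inj (\<lambda>x. A (j x))"
    and rho: "rho1 A j u x \<le> ereal r"
  shows "\<exists>\<xi>. bounded_linear \<xi> \<and> \<xi> \<circ> j \<in> subdiff_R u x \<and> onorm \<xi> \<le> M * r"
proof -
  interpret tikhonov_compact A j u by fact
  interpret A: bounded_linear A by (rule A)
  interpret j: bounded_linear j by (rule j)
  obtain xs wL where xs: "\<And>n. xs n \<in> tik_min A j u (1 / Suc n) (A (j x))"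
    and w: "(\<lambda>n. real (Suc n) *\<^sub>R (A (j x) - A (j (xs n)))) \<longlonglongrightarrow> wL" and "norm wL \<le> r"
    using tik_scaled_residuals_converge[OF T rho] by blast
  define w where "w = (\<lambda>n. real (Suc n) *\<^sub>R (A (j x) - A (j (xs n))))"
  have "w \<longlonglongrightarrow> wL" using w unfolding w_def .
  have vi: "regR u (xs n) + inner (w n) (A (j z) - A (j (xs n))) \<le> regR u z" for n z
    using tik_min_variational_ineq[OF A j u _ xs, of n z] unfolding w_def by (simp add: algebra_simps)
  have Axs: "(\<lambda>n. A (j (xs n))) \<longlonglongrightarrow> A (j x)" by (rule LIMSEQ_of_scaled_differences[OF w])
  have regR_xs: "regR u (xs n) \<le> regR u x" for n
  proof -
    have "0 \<le> inner (w n) (A (j x) - A (j (xs n)))" unfolding w_def by simp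
    then show ?thesis using vi[of n x] by linarith
  qed
  \<comment> \<open>The limit of the scaled residuals, read through \<open>A\<close>, is the required subgradient.\<close>
  define \<xi> where "\<xi> = (\<lambda>y. inner wL (A y))"
  have "bounded_linear \<xi>"
    unfolding \<xi>_def by (rule bounded_linear_compose[OF bounded_linear_inner_right A])
  moreover have "onorm \<xi> \<le> M * r"
  proof -
    have "onorm \<xi> \<le> M * norm wL"
      unfolding \<xi>_def using M A_above by (intro onorm_inner_compose_le) auto
    also have "\<dots> \<le> M * r" using M \<open>norm wL \<le> r\<close> by simp
    finally show ?thesis .
  qed
  moreover have "regR u x + \<xi> (j (z - x)) \<le> regR u z" for z
    using regR_subgradient_ineq_of_limit[OF inj Axs regR_xs vi \<open>w \<longlonglongrightarrow> wL\<close>, of z]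
    unfolding \<xi>_def by (simp add: j.diff A.diff inner_diff_right)
  ultimately show ?thesis
    unfolding subdiff_R_def using bounded_linear_compose[OF _ j] by (auto simp: comp_def)
qed

lemma rho1_le_onorm:
  fixes j :: "'x::real_normed_vector \<Rightarrow> 'xa::real_normed_vector"
    and A :: "'xa \<Rightarrow> 'y::real_inner"
  assumes A: "bounded_linear A" and j: "bounded_linear j" and u: "u \<ge> 1" and M: "M > 0"
    and A_below: "\<And>y. norm y / M \<le> norm (A y)"
    and \<xi>: "bounded_linear \<xi>" and subgrad: "\<xi> \<circ> j \<in> subdiff_R u x"
  shows "rho1 A j u x \<le> ereal (M * onorm \<xi>)"
  unfolding rho1_def
proof (rule Sup_least)
  fix t assume "t \<in> {ereal (norm (A (j x) - A (j xa)) / \<alpha>) | \<alpha> xa.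
      \<alpha> > 0 \<and> xa \<in> tik_min A j u \<alpha> (A (j x))}"
  then obtain \<alpha> xa where "t = ereal (norm (A (j x) - A (j xa)) / \<alpha>)"
    and "\<alpha> > 0" "xa \<in> tik_min A j u \<alpha> (A (j x))" by blast
  then show "t \<le> ereal (M * onorm \<xi>)"
    using tik_residual_quotient_le_onorm[OF A j u M A_below _ _ \<xi> subgrad] by simp
qed

lemma rho1_div_le_rho1_bar:
  fixes j :: "'x::real_normed_vector \<Rightarrow> 'xa::real_normed_vector"
    and A :: "'xa \<Rightarrow> 'y::real_inner"
  assumes A: "bounded_linear A" and j: "bounded_linear j" and u: "u \<ge> 1" and M: "M > 0"
    and A_below: "\<And>y. norm y / M \<le> norm (A y)"
  shows "rho1 A j u x / ereal M \<le> rho1_bar j u x"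
  unfolding rho1_bar_def
proof (rule Inf_greatest)
  fix t assume "t \<in> {ereal (onorm \<xi>) | \<xi>. bounded_linear \<xi> \<and> \<xi> \<circ> j \<in> subdiff_R u x}"
  then obtain \<xi> where "t = ereal (onorm \<xi>)" "bounded_linear \<xi>" "\<xi> \<circ> j \<in> subdiff_R u x" by blast
  then show "rho1 A j u x / ereal M \<le> t"
    using rho1_le_onorm[OF A j u M A_below] M by (simp add: ereal_divide_le_pos)
qed

lemma rho1_bar_le_mult_rho1:
  fixes A :: "'xa::real_normed_vector \<Rightarrow> 'y::{real_inner, complete_space}"
    and j :: "'x::real_normed_vector \<Rightarrow> 'xa"
  assumes T: "tikhonov_compact A j u" and M: "M > 0"
    and A_above: "\<And>y. norm (A y) \<le> M * norm y" and inj: "inj (\<lambda>x. A (j x))"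
  shows "rho1_bar j u x \<le> ereal M * rho1 A j u x"
proof (cases "rho1 A j u x")
  case (real r)
  then obtain \<xi> where "bounded_linear \<xi>" "\<xi> \<circ> j \<in> subdiff_R u x" "onorm \<xi> \<le> M * r"
    using exists_subgradient_onorm_le[OF T M A_above inj, of x r] by auto
  then have "rho1_bar j u x \<le> ereal (onorm \<xi>)"
    unfolding rho1_bar_def by (intro Inf_lower) blast
  then show ?thesis using \<open>onorm \<xi> \<le> M * r\<close> real by (simp add: order_trans)
next
  case MInf
  then show ?thesis using tikhonov_compact.rho1_nonneg[OF T, of x] by simp
qed (use M in simp)

lemma mem_K1_iff_subgradient:
  fixes A :: "'xa::real_normed_vector \<Rightarrow> 'y::{real_inner, complete_space}"
    and j :: "'x::real_normed_vector \<Rightarrow> 'xa"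
  assumes T: "tikhonov_compact A j u" and M: "M > 0"
    and A_below: "\<And>y. norm y / M \<le> norm (A y)" and A_above: "\<And>y. norm (A y) \<le> M * norm y"
    and inj: "inj (\<lambda>x. A (j x))"
  shows "x \<in> K1 A j u \<longleftrightarrow> (\<exists>\<xi>. bounded_linear \<xi> \<and> \<xi> \<circ> j \<in> subdiff_R u x)"
proof
  assume "x \<in> K1 A j u"
  then obtain r where "rho1 A j u x \<le> ereal r"
    unfolding K1_def by (cases "rho1 A j u x") auto
  then show "\<exists>\<xi>. bounded_linear \<xi> \<and> \<xi> \<circ> j \<in> subdiff_R u x"
    using exists_subgradient_onorm_le[OF T M A_above inj] by blast
next
  interpret tikhonov_compact A j u by fact
  assume "\<exists>\<xi>. bounded_linear \<xi> \<and> \<xi> \<circ> j \<in> subdiff_R u x"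
  then obtain \<xi> where "bounded_linear \<xi>" "\<xi> \<circ> j \<in> subdiff_R u x" by blast
  then have "rho1 A j u x \<le> ereal (M * onorm \<xi>)" by (rule rho1_le_onorm[OF A j u M A_below])
  then have "rho1 A j u x < \<infinity>" by (rule le_less_trans) simp
  then show "x \<in> K1 A j u" unfolding K1_def by simp
qed

theorem proposition4p4:
  fixes j :: "'x::banach \<Rightarrow> 'xa::banach"
    and A :: "'xa \<Rightarrow> 'y::{real_inner, complete_space}"
    and M u :: real
  assumes j_bl: "bounded_linear j" and j_inj: "inj j" and j_dense: "closure (range j) = UNIV"
    and A_bl: "bounded_linear A"
    and M_ge: "M \<ge> 1"
    and A_bounds: "\<And>x. norm x / M \<le> norm (A x) \<and> norm (A x) \<le> M * norm x"
    and u_ge: "u \<ge> 1"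
    and exist: "reflexive_space TYPE('x) \<or> (\<exists>\<tau>. admissible_topology A j u \<tau>)"
  shows "(\<forall>x. rho1 A j u x / ereal M \<le> rho1_bar j u x \<and> rho1_bar j u x \<le> ereal M * rho1 A j u x)
         \<and> (\<forall>x. x \<in> K1 A j u \<longleftrightarrow> (\<exists>\<xi>. bounded_linear \<xi> \<and> (\<xi> \<circ> j) \<in> subdiff_R u x))"
proof -
  have M: "M > 0" using M_ge by simp
  have A_below: "\<And>y. norm y / M \<le> norm (A y)" and A_above: "\<And>y. norm (A y) \<le> M * norm y"
    using A_bounds by auto
  have "inj A"
  proof (rule inj_onI)
    fix y z assume "A y = A z"
    then have "norm (y - z) / M \<le> 0"
      using A_below[of "y - z"] by (simp add: linear_diff[OF bounded_linear.linear[OF A_bl]])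
    then show "y = z" using M by (simp add: divide_le_0_iff)
  qed
  then have inj: "inj (\<lambda>x. A (j x))" using j_inj by (simp add: inj_compose[unfolded comp_def])
  have T: "tikhonov_compact A j u"
    unfolding tikhonov_compact_def using A_bl j_bl u_ge exist by blast
  show ?thesis
    using rho1_div_le_rho1_bar[OF A_bl j_bl u_ge M A_below]
      rho1_bar_le_mult_rho1[OF T M A_above inj] mem_K1_iff_subgradient[OF T M A_below A_above inj]
    by blast
qed

end
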